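(* Let $S$ be the set of $27$ sextactic points of the Fermat cubic $F$ (see context). Exactly $2268$ of the plane conics that contain six points of $S$ are reducible, i.e. are unions of two distinct lines. For each such conic $L\cup L'$: <ul> <li>each of the lines $L$ and $L'$ contains exactly $3$ points of $S$;</li> <li>the intersection point $L\cap L'$ does not belong to $S$.</li> </ul>
   Context: $F\subset\mathbb{P}^2_{\mathbb{C}}$ is the Fermat cubic $x^3+y^3+z^3=0$. The set of its sextactic points is $$S=\{[x:y:z]\in\mathbb{P}^2: x^3+y^3+z^3=0,\ (x^3-y^3)(y^3-z^3)(z^3-x^3)=0\}.$$ These are the $27$ points of $F$ at which the osculating conic has local contact order at least $6$ with $F$. A conic is a curve defined by a nonzero quadratic form up to scalar. *)

theory Defs
  imports Complex_Main
begin

type_synonym cvec3 = "complex \<times> complex \<times> complex"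
type_synonym qform = "complex \<times> complex \<times> complex \<times> complex \<times> complex \<times> complex"

definition proj_pt :: "cvec3 \<Rightarrow> cvec3 set" where
  "proj_pt v = (case v of (x, y, z) \<Rightarrow> {(c * x, c * y, c * z) | c. c \<noteq> 0})"

definition sextactic :: "cvec3 set set" where
  "sextactic = {proj_pt (x, y, z) | x y z. (x, y, z) \<noteq> (0, 0, 0) \<and>
      x ^ 3 + y ^ 3 + z ^ 3 = 0 \<and> (x ^ 3 - y ^ 3) * (y ^ 3 - z ^ 3) * (z ^ 3 - x ^ 3) = 0}"

definition lin :: "cvec3 \<Rightarrow> cvec3 \<Rightarrow> complex" where
  "lin l v = (case l of (a, b, c) \<Rightarrow> case v of (x, y, z) \<Rightarrow> a * x + b * y + c * z)"

definition qf :: "qform \<Rightarrow> cvec3 \<Rightarrow> complex" where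
  "qf q v = (case q of (a, b, c, d, e, f) \<Rightarrow> case v of (x, y, z) \<Rightarrow>
      a * x\<^sup>2 + b * y\<^sup>2 + c * z\<^sup>2 + d * x * y + e * y * z + f * z * x)"

definition conic_of :: "qform \<Rightarrow> qform set" where
  "conic_of q = (case q of (a, b, c, d, e, f) \<Rightarrow>
      {(k * a, k * b, k * c, k * d, k * e, k * f) | k. k \<noteq> 0})"

definition on_conic :: "qform \<Rightarrow> cvec3 set \<Rightarrow> bool" where
  "on_conic q P = (\<exists>v\<in>P. qf q v = 0)"

definition on_line :: "cvec3 \<Rightarrow> cvec3 set \<Rightarrow> bool" where
  "on_line l P = (\<exists>v\<in>P. lin l v = 0)"

definition same_line :: "cvec3 \<Rightarrow> cvec3 \<Rightarrow> bool" where
  "same_line l l' = (\<exists>k. k \<noteq> 0 \<and> l' = (case l of (a, b, c) \<Rightarrow> (k * a, k * b, k * c)))"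

definition reducible :: "qform \<Rightarrow> bool" where
  "reducible q = (\<exists>l l'. \<forall>v. qf q v = lin l v * lin l' v)"

end

theory Submission
  imports Defs
begin

text \<open>Let \<open>\<omega>\<close> be a primitive cube root of unity and \<open>\<kappa>\<close> the real cube root of \<open>-2\<close>.
  The 27 sextactic points are \<open>(1 : \<omega>\<^sup>i : \<omega>\<^sup>j\<kappa>)\<close> and their cyclic permutations. Their
  coordinates lie in \<open>\<int>[\<omega>, \<kappa>]\<close>, which has the \<open>\<int>\<close>-basis \<open>\<omega>\<^sup>a \<kappa>\<^sup>b\<close> (\<open>a < 2\<close>, \<open>b < 3\<close>)
  because \<open>\<kappa>\<close> has degree 3 over \<open>\<rat>\<close> and \<open>\<omega>\<close> is not real; so collinearity of three of
  the points is a finite integer computation. It shows that exactly 81 lines contain three of the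
  points, none contains four, and two of these lines share at most one point. A reducible conic
  \<open>L L'\<close> through six of the points therefore consists of two such lines with disjoint point sets,
  and conversely every such pair gives a conic through exactly their six points. The six points
  determine the pair, so the conics are counted by the 2268 unordered disjoint pairs of
  three-point lines.\<close>

section \<open>The ring \<open>\<int>[\<omega>, \<kappa>]\<close>\<close>

definition \<omega> :: complex where
  "\<omega> = Complex (-1 / 2) (sqrt 3 / 2)"

definition \<kappa> :: complex where
  "\<kappa> = - of_real (root 3 2)"

lemma omega_sq_add_omega_add_one: "\<omega>\<^sup>2 + \<omega> + 1 = 0"
  by (simp add: \<omega>_def power2_eq_square complex_eq_iff field_simps)

lemma omega_cube: "\<omega> ^ 3 = 1"
proof -
  have "\<omega> ^ 3 - 1 = (\<omega> - 1) * (\<omega>\<^sup>2 + \<omega> + 1)"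
    by (simp add: algebra_simps power2_eq_square power3_eq_cube)
  then show ?thesis
    by (simp add: omega_sq_add_omega_add_one)
qed

lemma omega_pow_mod: "\<omega> ^ n = \<omega> ^ (n mod 3)"
proof -
  have "\<omega> ^ n = \<omega> ^ (3 * (n div 3) + n mod 3)"
    by simp
  also have "\<dots> = (\<omega> ^ 3) ^ (n div 3) * \<omega> ^ (n mod 3)"
    by (simp only: power_add power_mult)
  finally show ?thesis
    by (simp add: omega_cube)
qed

lemma cube_omega_pow: "(\<omega> ^ n) ^ 3 = 1"
proof -
  have "(\<omega> ^ n) ^ 3 = (\<omega> ^ 3) ^ n"
    by (simp only: power_mult[symmetric] mult.commute)
  then show ?thesis
    by (simp add: omega_cube)
qed

lemma kappa_cube: "\<kappa> ^ 3 = -2"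
proof -
  have "root 3 2 ^ 3 = (2::real)"
    by simp
  then have "of_real (root 3 2) ^ 3 = (2::complex)"
    by (metis of_real_numeral of_real_power)
  then show ?thesis
    by (simp add: \<kappa>_def)
qed

lemma cube_eq_cube_imp_omega_multiple:
  assumes "w ^ 3 = z ^ 3"
  shows "\<exists>i<3. w = \<omega> ^ i * z"
proof -
  have "(w - z) * (w - \<omega> * z) * (w - \<omega>\<^sup>2 * z) =
      w ^ 3 - (\<omega>\<^sup>2 + \<omega> + 1) * w\<^sup>2 * z + \<omega> * (\<omega>\<^sup>2 + \<omega> + 1) * w * z\<^sup>2 - \<omega> ^ 3 * z ^ 3"
    by (simp add: algebra_simps power2_eq_square power3_eq_cube)
  also have "\<dots> = 0"
    using assms by (simp add: omega_sq_add_omega_add_one omega_cube)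
  finally have "\<exists>i\<in>{0, 1, 2}. w = \<omega> ^ i * z"
    by auto
  then show ?thesis
    by force
qed

lemma int_cube_eq_twice_cube_imp_zero: "(y::int) ^ 3 = 2 * z ^ 3 \<Longrightarrow> z = 0"
proof (induction "nat \<bar>z\<bar>" arbitrary: y z rule: less_induct)
  case less
  show ?case
  proof (rule ccontr)
    assume "z \<noteq> 0"
    have "even (y ^ 3)"
      using less.prems by simp
    then obtain a where a: "y = 2 * a"
      by auto
    have "z ^ 3 = 4 * a ^ 3"
      using less.prems a by (simp add: power_mult_distrib)
    then have "even (z ^ 3)"
      by simp
    then obtain b where b: "z = 2 * b"
      by auto
    have "a ^ 3 = 2 * b ^ 3"
      using \<open>z ^ 3 = 4 * a ^ 3\<close> b by (simp add: power_mult_distrib)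
    moreover have "nat \<bar>b\<bar> < nat \<bar>z\<bar>"
      using b \<open>z \<noteq> 0\<close> by auto
    ultimately have "b = 0"
      using less.hyps by blast
    with b \<open>z \<noteq> 0\<close> show False
      by simp
  qed
qed

lemma cube_root_minus_two_lin_indep:
  fixes x y z :: int and r :: real
  assumes r: "r ^ 3 = -2" and h: "x + y * r + z * r\<^sup>2 = 0"
  shows "x = 0 \<and> y = 0 \<and> z = 0"
proof -
  have "r * (x + y * r + z * r\<^sup>2) = x * r + y * r\<^sup>2 + z * r ^ 3"
    by (simp add: algebra_simps power2_eq_square power3_eq_cube)
  with h r have h': "x * r + y * r\<^sup>2 - 2 * z = 0"
    by simp
  have key: "r * of_int (x * z - y\<^sup>2) = of_int (x * y + 2 * z\<^sup>2)"
  proof -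
    have "z * (x * r + y * r\<^sup>2 - 2 * z) - y * (x + y * r + z * r\<^sup>2) = 0"
      using h h' by simp
    then show ?thesis
      by (simp add: algebra_simps power2_eq_square)
  qed
  show ?thesis
  proof (cases "x * z = y\<^sup>2")
    case False
    have "of_int ((x * y + 2 * z\<^sup>2) ^ 3) = (r * of_int (x * z - y\<^sup>2)) ^ 3"
      using key by simp
    also have "\<dots> = of_int (- (2 * (x * z - y\<^sup>2) ^ 3))"
      using r by (simp add: power_mult_distrib)
    finally have "(- (x * y + 2 * z\<^sup>2)) ^ 3 = 2 * (x * z - y\<^sup>2) ^ 3"
      by (subst power_minus_odd) (simp_all only: of_int_eq_iff odd_numeral, simp)
    then have "x * z - y\<^sup>2 = 0"
      by (rule int_cube_eq_twice_cube_imp_zero)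
    with False show ?thesis
      by simp
  next
    case True
    then have "of_int (x * y + 2 * z\<^sup>2) = (0::real)"
      using key by simp
    then have xy: "x * y = -2 * z\<^sup>2"
      by (simp only: of_int_eq_0_iff)
    have "y ^ 3 = (x * y) * z"
      using True by (simp add: algebra_simps power2_eq_square power3_eq_cube)
    then have "(- y) ^ 3 = 2 * z ^ 3"
      using xy by (simp add: power2_eq_square power3_eq_cube)
    then have "z = 0"
      by (rule int_cube_eq_twice_cube_imp_zero)
    with True h show ?thesis
      by simp
  qed
qed

type_synonym zcoords = "int \<times> int \<times> int \<times> int \<times> int \<times> int"

fun zc_val :: "zcoords \<Rightarrow> complex" where
  "zc_val (a0, a1, a2, b0, b1, b2) =
     (of_int a0 + of_int a1 * \<kappa> + of_int a2 * \<kappa>\<^sup>2) + \<omega> * (of_int b0 + of_int b1 * \<kappa> + of_int b2 * \<kappa>\<^sup>2)"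

fun zc_add :: "zcoords \<Rightarrow> zcoords \<Rightarrow> zcoords" where
  "zc_add (a0, a1, a2, b0, b1, b2) (c0, c1, c2, d0, d1, d2) =
     (a0 + c0, a1 + c1, a2 + c2, b0 + d0, b1 + d1, b2 + d2)"

fun zc_neg :: "zcoords \<Rightarrow> zcoords" where
  "zc_neg (a0, a1, a2, b0, b1, b2) = (- a0, - a1, - a2, - b0, - b1, - b2)"

text \<open>The coordinates of \<open>\<omega>\<^sup>e \<kappa>\<^sup>f\<close> for \<open>f \<le> 3\<close>, reduced by \<open>\<kappa>\<^sup>3 = -2\<close> and \<open>\<omega>\<^sup>2 = -1 - \<omega>\<close>.\<close>
definition zc_monom :: "nat \<Rightarrow> nat \<Rightarrow> zcoords" where
  "zc_monom e f = (case (if f = 0 then (1, 0, 0) else if f = 1 then (0, 1, 0)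
                         else if f = 2 then (0, 0, 1) else (-2, 0, 0)) of
     (a, b, c) \<Rightarrow> if e mod 3 = 0 then (a, b, c, 0, 0, 0)
                  else if e mod 3 = 1 then (0, 0, 0, a, b, c)
                  else (- a, - b, - c, - a, - b, - c))"

lemma zc_val_add: "zc_val (zc_add x y) = zc_val x + zc_val y"
  by (cases x; cases y) (simp add: algebra_simps)

lemma zc_val_neg: "zc_val (zc_neg x) = - zc_val x"
  by (cases x) (simp add: algebra_simps)

lemma zc_val_monom:
  assumes "f \<le> 3"
  shows "zc_val (zc_monom e f) = \<omega> ^ e * \<kappa> ^ f"
proof -
  have omega_sq: "\<omega>\<^sup>2 = -1 - \<omega>"
    using omega_sq_add_omega_add_one by (simp add: algebra_simps eq_neg_iff_add_eq_0)
  have "f = 0 \<or> f = 1 \<or> f = 2 \<or> f = 3" and "e mod 3 = 0 \<or> e mod 3 = 1 \<or> e mod 3 = 2"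
    using assms by auto
  then show ?thesis
    by (subst omega_pow_mod) (auto simp: zc_monom_def kappa_cube omega_sq algebra_simps)
qed

lemma zc_val_eq_0_iff: "zc_val x = 0 \<longleftrightarrow> x = (0, 0, 0, 0, 0, 0)"
proof
  assume val: "zc_val x = 0"
  obtain a0 a1 a2 b0 b1 b2 where x: "x = (a0, a1, a2, b0, b1, b2)"
    by (cases x)
  define r where "r = - root 3 2"
  have r: "r ^ 3 = -2"
    by (simp add: r_def power_minus_odd)
  define A where "A = a0 + a1 * r + a2 * r\<^sup>2"
  define B where "B = b0 + b1 * r + b2 * r\<^sup>2"
  have "complex_of_real A + \<omega> * complex_of_real B = 0"
    using val by (simp add: x A_def B_def r_def \<kappa>_def)
  moreover have "Im (complex_of_real A + \<omega> * complex_of_real B) = B * (sqrt 3 / 2)"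
    by (simp add: \<omega>_def)
  ultimately have "B = 0" and "A = 0"
    by auto
  then show "x = (0, 0, 0, 0, 0, 0)"
    using cube_root_minus_two_lin_indep[OF r] by (simp add: x A_def B_def)
qed simp

section \<open>Points, lines and determinants\<close>

fun smult3 :: "complex \<Rightarrow> cvec3 \<Rightarrow> cvec3" where
  "smult3 c (x, y, z) = (c * x, c * y, c * z)"

lemma mem_proj_pt_iff: "v \<in> proj_pt u \<longleftrightarrow> (\<exists>c. c \<noteq> 0 \<and> v = smult3 c u)"
  by (cases u) (auto simp: proj_pt_def)

lemma proj_pt_smult3:
  assumes "c \<noteq> 0"
  shows "proj_pt (smult3 c u) = proj_pt u"
proof -
  have "smult3 d (smult3 c u) = smult3 (d * c) u" for d
    by (cases u) simp
  moreover have "smult3 d u = smult3 (d / c * c) u" for d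
    using assms by simp
  ultimately show ?thesis
    unfolding set_eq_iff mem_proj_pt_iff using assms by (metis divide_eq_0_iff mult_eq_0_iff)
qed

lemma lin_smult3_right: "lin l (smult3 c v) = c * lin l v"
  by (cases l; cases v) (simp add: lin_def algebra_simps)

lemma lin_smult3_left: "lin (smult3 c l) v = c * lin l v"
  by (cases l; cases v) (simp add: lin_def algebra_simps)

lemma qf_smult3: "qf q (smult3 c v) = c\<^sup>2 * qf q v"
  by (cases q; cases v) (simp add: qf_def algebra_simps power2_eq_square)

lemma mem_proj_pt_self: "v \<in> proj_pt v"
  unfolding mem_proj_pt_iff by (intro exI[of _ 1]) (cases v, simp)

lemma on_line_proj_pt: "on_line l (proj_pt v) \<longleftrightarrow> lin l v = 0"
  unfolding on_line_def by (metis mem_proj_pt_self mem_proj_pt_iff lin_smult3_right mult_eq_0_iff)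

lemma on_conic_proj_pt: "on_conic q (proj_pt v) \<longleftrightarrow> qf q v = 0"
  unfolding on_conic_def
  by (metis mem_proj_pt_self mem_proj_pt_iff qf_smult3 mult_eq_0_iff power_eq_0_iff)

fun det3 :: "cvec3 \<Rightarrow> cvec3 \<Rightarrow> cvec3 \<Rightarrow> complex" where
  "det3 (u1, u2, u3) (v1, v2, v3) (w1, w2, w3) =
     u1 * v2 * w3 - u1 * v3 * w2 - u2 * v1 * w3 + u2 * v3 * w1 + u3 * v1 * w2 - u3 * v2 * w1"

fun cross3 :: "cvec3 \<Rightarrow> cvec3 \<Rightarrow> cvec3" where
  "cross3 (u1, u2, u3) (v1, v2, v3) = (u2 * v3 - u3 * v2, u3 * v1 - u1 * v3, u1 * v2 - u2 * v1)"

lemma lin_cross3: "lin (cross3 u v) w = det3 u v w"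
  by (cases u; cases v; cases w) (simp add: lin_def algebra_simps)

lemma det3_repeated: "det3 u v u = 0" "det3 u v v = 0"
  by (cases u; cases v; simp add: algebra_simps)+

lemma det3_swap12: "det3 v u w = - det3 u v w"
  by (cases u; cases v; cases w) (simp add: algebra_simps)

lemma det3_swap23: "det3 u w v = - det3 u v w"
  by (cases u; cases v; cases w) (simp add: algebra_simps)

lemma det3_eq_0_if_common_line:
  assumes "l \<noteq> (0, 0, 0)" "lin l u = 0" "lin l v = 0" "lin l w = 0"
  shows "det3 u v w = 0"
proof -
  obtain a b c where l: "l = (a, b, c)"
    by (cases l)
  obtain u1 u2 u3 v1 v2 v3 w1 w2 w3 where uvw: "u = (u1, u2, u3)" "v = (v1, v2, v3)" "w = (w1, w2, w3)"
    by (cases u, cases v, cases w)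
  have "a * u1 + b * u2 + c * u3 = 0" "a * v1 + b * v2 + c * v3 = 0" "a * w1 + b * w2 + c * w3 = 0"
    using assms(2-4) by (simp_all add: l uvw lin_def)
  then have "a * det3 u v w = 0" "b * det3 u v w = 0" "c * det3 u v w = 0"
    unfolding uvw det3.simps by algebra+
  with assms(1) l show ?thesis
    by auto
qed

lemma proportional_cross3_if_common_line:
  assumes "lin l u = 0" "lin l v = 0" "cross3 u v \<noteq> (0, 0, 0)"
  shows "\<exists>k. l = smult3 k (cross3 u v)"
proof -
  obtain a b c where l: "l = (a, b, c)"
    by (cases l)
  obtain u1 u2 u3 v1 v2 v3 where uv: "u = (u1, u2, u3)" "v = (v1, v2, v3)"
    by (cases u, cases v)
  define w1 w2 w3 where "w1 = u2 * v3 - u3 * v2" and "w2 = u3 * v1 - u1 * v3" and "w3 = u1 * v2 - u2 * v1"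
  have w: "cross3 u v = (w1, w2, w3)"
    by (simp add: uv w1_def w2_def w3_def)
  have "a * u1 + b * u2 + c * u3 = 0" "a * v1 + b * v2 + c * v3 = 0"
    using assms(1,2) by (simp_all add: l uv lin_def)
  then have e: "b * w3 = c * w2" "c * w1 = a * w3" "a * w2 = b * w1"
    unfolding w1_def w2_def w3_def by algebra+
  have "w1 \<noteq> 0 \<or> w2 \<noteq> 0 \<or> w3 \<noteq> 0"
    using assms(3) w by auto
  then obtain k where "a = k * w1" "b = k * w2" "c = k * w3"
  proof (elim disjE)
    assume "w1 \<noteq> 0"
    with e show thesis
      by (intro that[of "a / w1"]) (simp_all add: divide_simps)
  next
    assume "w2 \<noteq> 0"
    with e show thesis
      by (intro that[of "b / w2"]) (simp_all add: divide_simps)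
  next
    assume "w3 \<noteq> 0"
    with e show thesis
      by (intro that[of "c / w3"]) (simp_all add: divide_simps)
  qed
  then show ?thesis
    by (intro exI[of _ k]) (simp add: l w)
qed

section \<open>The sextactic points\<close>

text \<open>A point whose coordinates are monomials \<open>\<omega>\<^sup>e \<kappa>\<^sup>f\<close>, given by its exponent pairs \<open>(e, f)\<close>.\<close>
type_synonym exps3 = "(nat \<times> nat) \<times> (nat \<times> nat) \<times> (nat \<times> nat)"

fun monom_val :: "nat \<times> nat \<Rightarrow> complex" where
  "monom_val (e, f) = \<omega> ^ e * \<kappa> ^ f"

fun exps_val :: "exps3 \<Rightarrow> cvec3" where
  "exps_val (p, q, r) = (monom_val p, monom_val q, monom_val r)"

fun rot3 :: "'a \<times> 'a \<times> 'a \<Rightarrow> 'a \<times> 'a \<times> 'a" where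
  "rot3 (x, y, z) = (z, x, y)"

text \<open>Point number \<open>9 t + 3 i + j\<close> (\<open>t, i, j < 3\<close>) is the \<open>t\<close>-fold cyclic shift of
  \<open>(1, \<omega>\<^sup>i, \<omega>\<^sup>j \<kappa>)\<close>.\<close>
definition sext_exps :: "nat \<Rightarrow> exps3" where
  "sext_exps k = (rot3 ^^ (k div 9)) ((0, 0), (k mod 9 div 3, 0), (k mod 3, 1))"

definition sext_vec :: "nat \<Rightarrow> cvec3" where
  "sext_vec k = exps_val (sext_exps k)"

definition sext_pt :: "nat \<Rightarrow> cvec3 set" where
  "sext_pt k = proj_pt (sext_vec k)"

lemma exps_val_rot3: "exps_val (rot3 x) = rot3 (exps_val x)"
  by (cases x) auto

lemma exps_val_rot3_funpow: "exps_val ((rot3 ^^ n) x) = (rot3 ^^ n) (exps_val x)"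
  by (induction n) (simp_all add: exps_val_rot3)

lemma sext_vec_eq:
  assumes "t < 3" "i < 3" "j < 3"
  shows "sext_vec (9 * t + 3 * i + j) = (rot3 ^^ t) (1, \<omega> ^ i, \<omega> ^ j * \<kappa>)"
proof -
  have "t \<in> {0, 1, 2}" "i \<in> {0, 1, 2}" "j \<in> {0, 1, 2}"
    using assms by auto
  then have "(9 * t + 3 * i + j) div 9 = t" "(9 * t + 3 * i + j) mod 9 div 3 = i"
    "(9 * t + 3 * i + j) mod 3 = j"
    by auto
  then show ?thesis
    by (simp add: sext_vec_def sext_exps_def exps_val_rot3_funpow)
qed

lemma fermat_point_with_equal_cubes:
  assumes "(x, y, z) \<noteq> (0, 0, 0)" "x ^ 3 + y ^ 3 + z ^ 3 = 0" "x ^ 3 = y ^ 3"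
  shows "\<exists>c i j. c \<noteq> 0 \<and> i < 3 \<and> j < 3 \<and> (x, y, z) = smult3 c (1, \<omega> ^ i, \<omega> ^ j * \<kappa>)"
proof -
  have "x \<noteq> 0"
    using assms by auto
  obtain i where i: "i < 3" "y = \<omega> ^ i * x"
    using cube_eq_cube_imp_omega_multiple assms(3) by metis
  have "z ^ 3 = (\<kappa> * x) ^ 3"
    using assms(2,3) kappa_cube by algebra
  then obtain j where j: "j < 3" "z = \<omega> ^ j * (\<kappa> * x)"
    using cube_eq_cube_imp_omega_multiple by blast
  show ?thesis
    using \<open>x \<noteq> 0\<close> i j by (intro exI[of _ x] exI[of _ i] exI[of _ j]) (simp add: algebra_simps)
qed

lemma fermat_point_with_two_equal_cubes:
  assumes "(x, y, z) \<noteq> (0, 0, 0)" "x ^ 3 + y ^ 3 + z ^ 3 = 0"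
    and "(x ^ 3 - y ^ 3) * (y ^ 3 - z ^ 3) * (z ^ 3 - x ^ 3) = 0"
  shows "\<exists>c k. c \<noteq> 0 \<and> k < 27 \<and> (x, y, z) = smult3 c (sext_vec k)"
proof -
  have "x ^ 3 = y ^ 3 \<or> y ^ 3 = z ^ 3 \<or> z ^ 3 = x ^ 3"
    using assms(3) by auto
  then obtain t c i j where tij: "t < 3" "i < 3" "j < 3" and "c \<noteq> 0"
    and xyz: "(x, y, z) = smult3 c ((rot3 ^^ t) (1, \<omega> ^ i, \<omega> ^ j * \<kappa>))"
  proof (elim disjE)
    assume "x ^ 3 = y ^ 3"
    with assms fermat_point_with_equal_cubes[of x y z] show thesis
      by (metis funpow_0 that zero_less_numeral)
  next
    assume "y ^ 3 = z ^ 3"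
    with assms fermat_point_with_equal_cubes[of y z x] obtain c i j
      where "c \<noteq> 0" "i < 3" "j < 3" "(y, z, x) = smult3 c (1, \<omega> ^ i, \<omega> ^ j * \<kappa>)"
      by (auto simp: add_ac)
    then show thesis
      by (intro that[of 1 i j c]) auto
  next
    assume "z ^ 3 = x ^ 3"
    with assms fermat_point_with_equal_cubes[of z x y] obtain c i j
      where "c \<noteq> 0" "i < 3" "j < 3" "(z, x, y) = smult3 c (1, \<omega> ^ i, \<omega> ^ j * \<kappa>)"
      by (auto simp: add_ac)
    then show thesis
      by (intro that[of 2 i j c]) (auto simp: numeral_2_eq_2)
  qed
  moreover have "9 * t + 3 * i + j < 27"
    using tij by linarith
  ultimately show ?thesis
    using xyz sext_vec_eq[OF tij] by metis
qed

lemma sext_index_cases: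
  fixes k :: nat
  assumes "k < 27"
  obtains t i j where "t \<in> {0, 1, 2}" "i \<in> {0, 1, 2}" "j \<in> {0, 1, 2}" "k = 9 * t + 3 * i + j"
proof -
  have "n < 3 \<Longrightarrow> n \<in> {0, 1, 2}" for n :: nat
    by auto
  moreover have "k div 9 < 3" "k mod 9 div 3 < 3" "k mod 3 < 3"
    using assms by auto
  moreover have "k = 9 * (k div 9) + 3 * (k mod 9 div 3) + k mod 3"
    by presburger
  ultimately show thesis
    using that[of "k div 9" "k mod 9 div 3" "k mod 3"] by blast
qed

lemma sext_pt_sextactic:
  assumes "k < 27"
  shows "sext_pt k \<in> sextactic"
proof -
  obtain t i j where tij: "t \<in> {0, 1, 2}" "i \<in> {0, 1, 2}" "j \<in> {0, 1, 2}" "k = 9 * t + 3 * i + j"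
    using sext_index_cases[OF assms] .
  have cubes: "(\<omega> ^ i) ^ 3 = 1" "(\<omega> ^ j * \<kappa>) ^ 3 = -2"
    by (simp_all add: cube_omega_pow kappa_cube power_mult_distrib)
  obtain x y z where xyz: "sext_vec k = (x, y, z)"
    by (cases "sext_vec k")
  have "(x, y, z) \<noteq> (0, 0, 0) \<and> x ^ 3 + y ^ 3 + z ^ 3 = 0 \<and>
      (x ^ 3 - y ^ 3) * (y ^ 3 - z ^ 3) * (z ^ 3 - x ^ 3) = 0"
    using tij xyz sext_vec_eq[of t i j] cubes by (auto simp: numeral_2_eq_2)
  then show ?thesis
    unfolding sextactic_def sext_pt_def xyz by blast
qed

lemma sextactic_eq: "sextactic = sext_pt ` {..<27}"
proof (intro equalityI subsetI)
  fix P
  assume "P \<in> sextactic"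
  then obtain x y z where P: "P = proj_pt (x, y, z)" and "(x, y, z) \<noteq> (0, 0, 0)"
    "x ^ 3 + y ^ 3 + z ^ 3 = 0" "(x ^ 3 - y ^ 3) * (y ^ 3 - z ^ 3) * (z ^ 3 - x ^ 3) = 0"
    unfolding sextactic_def by blast
  then obtain c k where "c \<noteq> 0" "k < 27" "(x, y, z) = smult3 c (sext_vec k)"
    using fermat_point_with_two_equal_cubes by blast
  then show "P \<in> sext_pt ` {..<27}"
    by (simp add: P sext_pt_def proj_pt_smult3)
qed (auto intro: sext_pt_sextactic)

section \<open>Lines through three sextactic points\<close>

definition zc_term :: "nat \<times> nat \<Rightarrow> nat \<times> nat \<Rightarrow> nat \<times> nat \<Rightarrow> zcoords" where
  "zc_term x y z = zc_monom (fst x + fst y + fst z) (snd x + snd y + snd z)"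

fun zc_det :: "exps3 \<Rightarrow> exps3 \<Rightarrow> exps3 \<Rightarrow> zcoords" where
  "zc_det (u1, u2, u3) (v1, v2, v3) (w1, w2, w3) =
     zc_add (zc_add (zc_add (zc_term u1 v2 w3) (zc_neg (zc_term u1 v3 w2)))
                    (zc_add (zc_neg (zc_term u2 v1 w3)) (zc_term u2 v3 w1)))
            (zc_add (zc_term u3 v1 w2) (zc_neg (zc_term u3 v2 w1)))"

fun linear_in_kappa :: "exps3 \<Rightarrow> bool" where
  "linear_in_kappa ((_, f1), (_, f2), (_, f3)) \<longleftrightarrow> f1 \<le> 1 \<and> f2 \<le> 1 \<and> f3 \<le> 1"

lemma zc_val_term:
  "snd x \<le> 1 \<Longrightarrow> snd y \<le> 1 \<Longrightarrow> snd z \<le> 1 \<Longrightarrow>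
    zc_val (zc_term x y z) = monom_val x * monom_val y * monom_val z"
  by (cases x; cases y; cases z) (simp add: zc_term_def zc_val_monom power_add)

lemma zc_val_det:
  assumes "linear_in_kappa u" "linear_in_kappa v" "linear_in_kappa w"
  shows "zc_val (zc_det u v w) = det3 (exps_val u) (exps_val v) (exps_val w)"
  using assms
  by (cases u; cases v; cases w)
     (auto simp: zc_val_add zc_val_neg zc_val_term algebra_simps)

lemma linear_in_kappa_rot3: "linear_in_kappa (rot3 x) \<longleftrightarrow> linear_in_kappa x"
  by (cases x) auto

lemma linear_in_kappa_sext_exps: "linear_in_kappa (sext_exps k)"
proof -
  have "linear_in_kappa ((rot3 ^^ n) x) = linear_in_kappa x" for n and x :: exps3
    by (induction n) (simp_all add: linear_in_kappa_rot3)
  then show ?thesis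
    by (simp add: sext_exps_def)
qed

definition collinear :: "nat \<Rightarrow> nat \<Rightarrow> nat \<Rightarrow> bool" where
  "collinear i j k \<longleftrightarrow> det3 (sext_vec i) (sext_vec j) (sext_vec k) = 0"

text \<open>This code equation makes \<open>collinear\<close> decidable by exact integer arithmetic, which is how
  \<open>code_simp\<close> evaluates the facts about \<open>three_point_lines\<close> below.\<close>
lemma collinear_code [code]:
  "collinear i j k \<longleftrightarrow> zc_det (sext_exps i) (sext_exps j) (sext_exps k) = (0, 0, 0, 0, 0, 0)"
  by (simp add: collinear_def sext_vec_def zc_val_det linear_in_kappa_sext_exps
      flip: zc_val_eq_0_iff)

lemma collinear_swap12: "collinear j i k \<longleftrightarrow> collinear i j k"
  by (simp add: collinear_def det3_swap12[of "sext_vec j" "sext_vec i"])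

lemma collinear_swap23: "collinear i k j \<longleftrightarrow> collinear i j k"
  by (simp add: collinear_def det3_swap23[of "sext_vec i" "sext_vec k"])

definition three_point_lines :: "nat list list" where
  "three_point_lines =
     [[i, j, k]. i \<leftarrow> [0..<27], j \<leftarrow> [Suc i..<27], k \<leftarrow> [Suc j..<27], collinear i j k]"

lemma three_point_lines_pairwise_meet:
  "sorted_wrt (\<lambda>s t. card (set s \<inter> set t) \<le> 1) three_point_lines"
  by code_simp

lemma disjoint_three_point_line_pairs_count:
  "(\<Sum>a<length three_point_lines. length (filter (\<lambda>t. set (three_point_lines ! a) \<inter> set t = {})
      (drop (Suc a) three_point_lines))) = 2268"
  by code_simp

lemma mem_three_point_lines_iff:
  "t \<in> set three_point_lines \<longleftrightarrow> (\<exists>i j k. t = [i, j, k] \<and> i < j \<and> j < k \<and> k < 27 \<and> collinear i j k)"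
  by (auto simp: three_point_lines_def)

lemma three_point_line_through:
  assumes "a < 27" "b < 27" "c < 27" "distinct [a, b, c]" "collinear a b c"
  shows "\<exists>t\<in>set three_point_lines. set t = {a, b, c}"
proof -
  have sorted: "\<exists>t\<in>set three_point_lines. set t = {x, y, z}"
    if "x < y" "y < z" "z < 27" "collinear x y z" for x y z
  proof
    show "[x, y, z] \<in> set three_point_lines"
      using that by (auto simp: mem_three_point_lines_iff)
  qed simp
  consider "a < b" "b < c" | "a < c" "c < b" | "b < a" "a < c" | "b < c" "c < a"
    | "c < a" "a < b" | "c < b" "b < a"
    using assms(4) by (simp add: nat_neq_iff) linarith
  then show ?thesis
  proof cases
    case 1
    with sorted[of a b c] assms show ?thesis by simp
  next
    case 2
    with sorted[of a c b] assms show ?thesis by (simp add: collinear_swap23 insert_commute)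
  next
    case 3
    with sorted[of b a c] assms show ?thesis by (simp add: collinear_swap12 insert_commute)
  next
    case 4
    with sorted[of b c a] assms show ?thesis
      by (simp add: collinear_swap12 collinear_swap23 insert_commute)
  next
    case 5
    with sorted[of c a b] assms show ?thesis
      by (simp add: collinear_swap12 collinear_swap23 insert_commute)
  next
    case 6
    with sorted[of c b a] assms show ?thesis
      by (simp add: collinear_swap12 collinear_swap23 insert_commute)
  qed
qed

lemma card_three_point_line: "t \<in> set three_point_lines \<Longrightarrow> card (set t) = 3"
  by (auto simp: mem_three_point_lines_iff)

lemma card_inter_three_point_lines:
  assumes "s \<in> set three_point_lines" "t \<in> set three_point_lines" "s \<noteq> t"
  shows "card (set s \<inter> set t) \<le> 1"
proof -
  obtain i j where ij: "i < length three_point_lines" "j < length three_point_lines"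
    "three_point_lines ! i = s" "three_point_lines ! j = t"
    using assms(1,2) by (meson in_set_conv_nth)
  with assms(3) have "i < j \<or> j < i"
    by (metis linorder_neqE_nat)
  with ij three_point_lines_pairwise_meet show ?thesis
    unfolding sorted_wrt_iff_nth_less by (metis Int_commute)
qed

lemma three_point_lines_eqI:
  assumes "s \<in> set three_point_lines" "t \<in> set three_point_lines"
    and "a \<noteq> b" "{a, b} \<subseteq> set s" "{a, b} \<subseteq> set t"
  shows "s = t"
proof (rule ccontr)
  assume "s \<noteq> t"
  have "card (set s \<inter> set t) \<le> 1"
    using assms(1,2) \<open>s \<noteq> t\<close> by (rule card_inter_three_point_lines)
  moreover have "card {a, b} \<le> card (set s \<inter> set t)"
    using assms(4,5) by (intro card_mono) auto
  ultimately show False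
    using assms(3) by simp
qed

lemma third_collinear_point_unique:
  assumes "a < 27" "b < 27" "a \<noteq> b"
    and "k < 27" "k \<notin> {a, b}" "collinear a b k" and "k' < 27" "k' \<notin> {a, b}" "collinear a b k'"
  shows "k = k'"
proof -
  obtain s where s: "s \<in> set three_point_lines" "set s = {a, b, k}"
    using three_point_line_through[of a b k] assms by auto
  obtain t where t: "t \<in> set three_point_lines" "set t = {a, b, k'}"
    using three_point_line_through[of a b k'] assms by auto
  have "s = t"
    using three_point_lines_eqI[OF s(1) t(1) \<open>a \<noteq> b\<close>] s t by auto
  with s t assms(5,8) show ?thesis
    by auto
qed

lemma distinct_three_point_lines: "distinct three_point_lines"
  unfolding distinct_conv_nth
proof (intro allI impI)
  fix i j
  assume ij: "i < length three_point_lines" "j < length three_point_lines" "i \<noteq> j"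
  show "three_point_lines ! i \<noteq> three_point_lines ! j"
  proof
    assume eq: "three_point_lines ! i = three_point_lines ! j"
    from ij have "card (set (three_point_lines ! i) \<inter> set (three_point_lines ! j)) \<le> 1"
      using three_point_lines_pairwise_meet unfolding sorted_wrt_iff_nth_less
      by (metis Int_commute linorder_neqE_nat)
    with eq card_three_point_line[OF nth_mem[OF ij(1)]] show False
      by simp
  qed
qed

lemma cross3_sext_vec_neq_0:
  assumes "i < 27" "j < 27" "i \<noteq> j"
  shows "cross3 (sext_vec i) (sext_vec j) \<noteq> (0, 0, 0)"
proof
  assume "cross3 (sext_vec i) (sext_vec j) = (0, 0, 0)"
  moreover have "lin (0, 0, 0) w = 0" for w
    by (cases w) (simp add: lin_def)
  ultimately have col: "collinear i j k" for k
    unfolding collinear_def by (metis lin_cross3)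
  have "\<exists>k k'. k < 27 \<and> k' < 27 \<and> distinct [i, j, k, k']"
    using assms by simp presburger
  then obtain k k' where "k < 27" "k' < 27" "distinct [i, j, k, k']"
    by blast
  with assms col show False
    using third_collinear_point_unique[of i j k k'] by simp
qed

lemma inj_on_sext_pt: "inj_on sext_pt {..<27}"
proof (rule inj_onI, rule ccontr)
  fix i j
  assume ij: "i \<in> {..<27}" "j \<in> {..<27}" "sext_pt i = sext_pt j" "i \<noteq> j"
  then obtain c where "sext_vec j = smult3 c (sext_vec i)"
    unfolding sext_pt_def by (metis mem_proj_pt_iff mem_proj_pt_self)
  then have "cross3 (sext_vec i) (sext_vec j) = (0, 0, 0)"
    by (cases "sext_vec i") (simp add: algebra_simps)
  with ij show False
    using cross3_sext_vec_neq_0 by simp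
qed

section \<open>Point sets of lines\<close>

definition line_pts :: "cvec3 \<Rightarrow> nat set" where
  "line_pts l = {k. k < 27 \<and> lin l (sext_vec k) = 0}"

lemma finite_line_pts: "finite (line_pts l)"
  by (simp add: line_pts_def)

lemma collinear_if_in_line_pts:
  assumes "l \<noteq> (0, 0, 0)" "i \<in> line_pts l" "j \<in> line_pts l" "k \<in> line_pts l"
  shows "collinear i j k"
  using assms det3_eq_0_if_common_line unfolding line_pts_def collinear_def by blast

lemma card_line_pts_le_3:
  assumes "l \<noteq> (0, 0, 0)"
  shows "card (line_pts l) \<le> 3"
proof (cases "\<exists>a\<in>line_pts l. \<exists>b\<in>line_pts l. a \<noteq> b")
  case False
  then have "card (line_pts l) \<le> Suc 0"
    using card_le_Suc0_iff_eq[OF finite_line_pts] by blast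
  then show ?thesis
    by simp
next
  case True
  then obtain a b where ab: "a \<in> line_pts l" "b \<in> line_pts l" "a \<noteq> b"
    by blast
  have "k = k'" if "k \<in> line_pts l - {a, b}" "k' \<in> line_pts l - {a, b}" for k k'
  proof -
    have "a < 27" "b < 27" "k < 27" "k' < 27"
      using that ab by (auto simp: line_pts_def)
    with that ab show ?thesis
      using third_collinear_point_unique[of a b k k'] collinear_if_in_line_pts[OF assms] by blast
  qed
  then have "card (line_pts l - {a, b}) \<le> Suc 0"
    using card_le_Suc0_iff_eq[of "line_pts l - {a, b}"] finite_line_pts by blast
  moreover have "card (line_pts l - {a, b}) = card (line_pts l) - 2"
    using ab by (simp add: card_Diff_subset finite_line_pts)
  ultimately show ?thesis
    by linarith
qed

lemma line_pts_eq_three_point_line: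
  assumes "l \<noteq> (0, 0, 0)" "card (line_pts l) = 3"
  obtains t where "t \<in> set three_point_lines" "line_pts l = set t"
proof -
  obtain a b c where abc: "line_pts l = {a, b, c}" "a \<noteq> b" "a \<noteq> c" "b \<noteq> c"
    using assms(2) card_3_iff by metis
  then have "collinear a b c"
    using collinear_if_in_line_pts[OF assms(1)] by simp
  moreover have "a < 27" "b < 27" "c < 27"
    using abc(1) by (auto simp: line_pts_def)
  ultimately show thesis
    using three_point_line_through[of a b c] abc that by auto
qed

definition line_of :: "nat list \<Rightarrow> cvec3" where
  "line_of t = cross3 (sext_vec (t ! 0)) (sext_vec (t ! 1))"

lemma line_of_neq_0:
  assumes "t \<in> set three_point_lines"
  shows "line_of t \<noteq> (0, 0, 0)"
  using assms cross3_sext_vec_neq_0 by (auto simp: mem_three_point_lines_iff line_of_def)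

lemma line_pts_line_of:
  assumes "t \<in> set three_point_lines"
  shows "line_pts (line_of t) = set t"
proof (rule card_seteq[symmetric])
  obtain i j k where t: "t = [i, j, k]" "i < j" "j < k" "k < 27" "collinear i j k"
    using assms by (auto simp: mem_three_point_lines_iff)
  show "set t \<subseteq> line_pts (line_of t)"
    using t by (auto simp: line_pts_def line_of_def det3_repeated lin_cross3 collinear_def)
  show "card (line_pts (line_of t)) \<le> card (set t)"
    using card_line_pts_le_3[OF line_of_neq_0[OF assms]] card_three_point_line[OF assms] by simp
qed (simp add: finite_line_pts)

lemma proportional_line_of:
  assumes "l \<noteq> (0, 0, 0)" "t \<in> set three_point_lines" "set t \<subseteq> line_pts l"
  obtains c where "c \<noteq> 0" "l = smult3 c (line_of t)"
proof -
  obtain i j k where t: "t = [i, j, k]" "i < j" "j < k" "k < 27"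
    using assms(2) by (auto simp: mem_three_point_lines_iff)
  then have "lin l (sext_vec i) = 0" "lin l (sext_vec j) = 0"
    using assms(3) by (auto simp: line_pts_def)
  moreover have "cross3 (sext_vec i) (sext_vec j) \<noteq> (0, 0, 0)"
    using t cross3_sext_vec_neq_0 by simp
  ultimately obtain c where "l = smult3 c (cross3 (sext_vec i) (sext_vec j))"
    using proportional_cross3_if_common_line by blast
  then have c: "l = smult3 c (line_of t)"
    by (simp add: line_of_def t(1))
  moreover have "c \<noteq> 0"
    using assms(1) c by (cases "line_of t") auto
  ultimately show thesis
    using that by blast
qed

lemma on_line_sext_pt: "k < 27 \<Longrightarrow> on_line l (sext_pt k) \<longleftrightarrow> k \<in> line_pts l"
  by (simp add: sext_pt_def on_line_proj_pt line_pts_def)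

lemma sextactic_on_line: "{P \<in> sextactic. on_line l P} = sext_pt ` line_pts l"
  by (auto simp: sextactic_eq line_pts_def sext_pt_def on_line_proj_pt)

lemma card_sextactic_on_line: "card {P \<in> sextactic. on_line l P} = card (line_pts l)"
  unfolding sextactic_on_line
  by (rule card_image, rule inj_on_subset[OF inj_on_sext_pt]) (auto simp: line_pts_def)

section \<open>Reducible conics\<close>

fun prod_qform :: "cvec3 \<Rightarrow> cvec3 \<Rightarrow> qform" where
  "prod_qform (a, b, c) (a', b', c') =
     (a * a', b * b', c * c', a * b' + b * a', b * c' + c * b', c * a' + a * c')"

fun qsmult :: "complex \<Rightarrow> qform \<Rightarrow> qform" where
  "qsmult k (a, b, c, d, e, f) = (k * a, k * b, k * c, k * d, k * e, k * f)"

lemma qf_prod_qform: "qf (prod_qform l l') v = lin l v * lin l' v"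
  by (cases l; cases l'; cases v) (simp add: qf_def lin_def algebra_simps power2_eq_square)

lemma qf_qsmult: "qf (qsmult k q) v = k * qf q v"
  by (cases q; cases v) (simp add: qf_def algebra_simps)

lemma prod_qform_unique:
  assumes "\<forall>v. qf q v = lin l v * lin l' v"
  shows "q = prod_qform l l'"
proof -
  obtain a b c d e f where q: "q = (a, b, c, d, e, f)"
    by (cases q)
  obtain l1 l2 l3 m1 m2 m3 where l: "l = (l1, l2, l3)" "l' = (m1, m2, m3)"
    by (cases l, cases l')
  have h: "a * x\<^sup>2 + b * y\<^sup>2 + c * z\<^sup>2 + d * x * y + e * y * z + f * z * x =
      (l1 * x + l2 * y + l3 * z) * (m1 * x + m2 * y + m3 * z)" for x y z
    using assms by (simp add: q l qf_def lin_def)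
  have "a = l1 * m1" "b = l2 * m2" "c = l3 * m3"
    using h[of 1 0 0] h[of 0 1 0] h[of 0 0 1] by simp_all
  moreover have "d = l1 * m2 + l2 * m1" "e = l2 * m3 + l3 * m2" "f = l3 * m1 + l1 * m3"
    using h[of 1 1 0] h[of 0 1 1] h[of 1 0 1] calculation by (simp_all add: algebra_simps)
  ultimately show ?thesis
    by (simp add: q l)
qed

lemma prod_qform_smult3: "prod_qform (smult3 c l) (smult3 c' l') = qsmult (c * c') (prod_qform l l')"
  by (cases l; cases l') (simp add: algebra_simps)

lemma prod_qform_commute: "prod_qform l l' = prod_qform l' l"
  by (cases l; cases l') (simp add: algebra_simps)

lemma qsmult_qsmult: "qsmult j (qsmult k q) = qsmult (j * k) q"
  by (cases q) simp

lemma conic_of_eq: "conic_of q = {qsmult j q | j. j \<noteq> 0}"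
  by (cases q) (simp add: conic_of_def)

lemma conic_of_qsmult:
  assumes "k \<noteq> 0"
  shows "conic_of (qsmult k q) = conic_of q"
  unfolding conic_of_eq
proof (intro equalityI subsetI)
  fix x
  assume "x \<in> {qsmult j (qsmult k q) | j. j \<noteq> 0}"
  with assms show "x \<in> {qsmult j q | j. j \<noteq> 0}"
    by (auto simp: qsmult_qsmult)
next
  fix x
  assume "x \<in> {qsmult j q | j. j \<noteq> 0}"
  then obtain j where "j \<noteq> 0" "x = qsmult (j / k) (qsmult k q)"
    using assms by (auto simp: qsmult_qsmult)
  with assms show "x \<in> {qsmult j (qsmult k q) | j. j \<noteq> 0}"
    by auto
qed

lemma conic_of_eqD:
  assumes "conic_of q = conic_of q'"
  obtains k where "k \<noteq> 0" "q' = qsmult k q"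
proof -
  have "q' \<in> conic_of q'"
    by (cases q') (auto simp: conic_of_def intro: exI[of _ 1])
  with assms that show thesis
    by (cases q) (auto simp: conic_of_def)
qed

definition conic_pts :: "qform \<Rightarrow> nat set" where
  "conic_pts q = {k. k < 27 \<and> qf q (sext_vec k) = 0}"

lemma conic_pts_qsmult: "k \<noteq> 0 \<Longrightarrow> conic_pts (qsmult k q) = conic_pts q"
  by (simp add: conic_pts_def qf_qsmult)

lemma conic_pts_prod_qform: "conic_pts (prod_qform l l') = line_pts l \<union> line_pts l'"
  by (auto simp: conic_pts_def line_pts_def qf_prod_qform)

lemma card_sextactic_on_conic: "card {P \<in> sextactic. on_conic q P} = card (conic_pts q)"
proof -
  have "{P \<in> sextactic. on_conic q P} = sext_pt ` conic_pts q"
    by (auto simp: sextactic_eq conic_pts_def sext_pt_def on_conic_proj_pt)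
  then show ?thesis
    by (simp add: card_image inj_on_subset[OF inj_on_sext_pt] conic_pts_def subset_eq)
qed

lemma rich_reducible_conic_lines:
  assumes "q \<noteq> (0, 0, 0, 0, 0, 0)" "6 \<le> card (conic_pts q)" "\<forall>v. qf q v = lin l v * lin l' v"
  shows "l \<noteq> (0, 0, 0)" "l' \<noteq> (0, 0, 0)" "card (line_pts l) = 3" "card (line_pts l') = 3"
    "line_pts l \<inter> line_pts l' = {}"
proof -
  have q: "q = prod_qform l l'"
    using assms(3) by (rule prod_qform_unique)
  show l: "l \<noteq> (0, 0, 0)" "l' \<noteq> (0, 0, 0)"
    using assms(1) unfolding q by (cases l; cases l'; auto)+
  have "6 \<le> card (line_pts l \<union> line_pts l')"
    using assms(2) by (simp add: q conic_pts_prod_qform)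
  moreover have "card (line_pts l \<union> line_pts l') + card (line_pts l \<inter> line_pts l') =
      card (line_pts l) + card (line_pts l')"
    by (rule card_Un_Int[OF finite_line_pts finite_line_pts, symmetric])
  moreover have "card (line_pts l) \<le> 3" "card (line_pts l') \<le> 3"
    using l by (simp_all add: card_line_pts_le_3)
  ultimately have "card (line_pts l) = 3" "card (line_pts l') = 3"
    and "card (line_pts l \<inter> line_pts l') = 0"
    by linarith+
  then show "card (line_pts l) = 3" "card (line_pts l') = 3" "line_pts l \<inter> line_pts l' = {}"
    by (simp_all add: finite_line_pts)
qed

lemma card_nth_filter_drop:
  "card {j. n \<le> j \<and> j < length xs \<and> P (xs ! j)} = length (filter P (drop n xs))"
proof -
  have "{j. n \<le> j \<and> j < length xs \<and> P (xs ! j)} =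
      (+) n ` {i. i < length (drop n xs) \<and> P (drop n xs ! i)}"
  proof (intro equalityI subsetI)
    fix j
    assume "j \<in> {j. n \<le> j \<and> j < length xs \<and> P (xs ! j)}"
    then show "j \<in> (+) n ` {i. i < length (drop n xs) \<and> P (drop n xs ! i)}"
      by (intro image_eqI[of _ _ "j - n"]) auto
  qed auto
  then show ?thesis
    by (simp add: length_filter_conv_card card_image)
qed

definition disjoint_line_pairs :: "(nat \<times> nat) set" where
  "disjoint_line_pairs = {(a, b). a < b \<and> b < length three_point_lines \<and>
      set (three_point_lines ! a) \<inter> set (three_point_lines ! b) = {}}"

lemma card_disjoint_line_pairs: "card disjoint_line_pairs = 2268"
proof -
  let ?L = three_point_lines
  have pairs: "disjoint_line_pairs = (SIGMA a:{..<length ?L}.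
      {b. Suc a \<le> b \<and> b < length ?L \<and> set (?L ! a) \<inter> set (?L ! b) = {}})"
    by (auto simp: disjoint_line_pairs_def)
  have "card disjoint_line_pairs = (\<Sum>a<length ?L.
      card {b. Suc a \<le> b \<and> b < length ?L \<and> set (?L ! a) \<inter> set (?L ! b) = {}})"
    unfolding pairs by (rule card_SigmaI) auto
  also have "\<dots> =
      (\<Sum>a<length ?L. length (filter (\<lambda>t. set (?L ! a) \<inter> set t = {}) (drop (Suc a) ?L)))"
    by (intro sum.cong refl card_nth_filter_drop)
  finally show ?thesis
    using disjoint_three_point_line_pairs_count by simp
qed

lemma three_point_line_in_union:
  assumes "s \<in> set three_point_lines" "t \<in> set three_point_lines" "u \<in> set three_point_lines"
    and "set u \<subseteq> set s \<union> set t"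
  shows "u = s \<or> u = t"
proof (rule ccontr)
  assume "\<not> (u = s \<or> u = t)"
  then have "card (set u \<inter> set s) \<le> 1" "card (set u \<inter> set t) \<le> 1"
    using assms card_inter_three_point_lines by auto
  moreover have "card (set u) \<le> card (set u \<inter> set s) + card (set u \<inter> set t)"
    using assms(4) card_Un_le[of "set u \<inter> set s" "set u \<inter> set t"]
    by (simp add: Int_Un_distrib[symmetric] Int_absorb2)
  ultimately show False
    using card_three_point_line[OF assms(3)] by simp
qed

definition pair_conic :: "nat \<times> nat \<Rightarrow> qform set" where
  "pair_conic p = conic_of
     (prod_qform (line_of (three_point_lines ! fst p)) (line_of (three_point_lines ! snd p)))"

lemma conic_pts_pair:
  assumes "a < length three_point_lines" "b < length three_point_lines"
  shows "conic_pts (prod_qform (line_of (three_point_lines ! a)) (line_of (three_point_lines ! b))) =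
    set (three_point_lines ! a) \<union> set (three_point_lines ! b)"
  using assms by (simp add: conic_pts_prod_qform line_pts_line_of)

lemma inj_on_pair_conic: "inj_on pair_conic disjoint_line_pairs"
proof (rule inj_onI)
  let ?L = three_point_lines
  fix p p'
  assume "p \<in> disjoint_line_pairs" "p' \<in> disjoint_line_pairs" "pair_conic p = pair_conic p'"
  then obtain a b c d where p: "p = (a, b)" "p' = (c, d)" "a < b" "b < length ?L" "c < d" "d < length ?L"
    and eq: "pair_conic (a, b) = pair_conic (c, d)"
    by (auto simp: disjoint_line_pairs_def)
  then obtain k where "k \<noteq> 0"
    "prod_qform (line_of (?L ! c)) (line_of (?L ! d)) =
      qsmult k (prod_qform (line_of (?L ! a)) (line_of (?L ! b)))"
    unfolding pair_conic_def by (auto elim: conic_of_eqD)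
  then have union: "set (?L ! a) \<union> set (?L ! b) = set (?L ! c) \<union> set (?L ! d)"
    using p by (metis conic_pts_qsmult conic_pts_pair order.strict_trans)
  have "?L ! c \<in> {?L ! a, ?L ! b}" "?L ! d \<in> {?L ! a, ?L ! b}"
    using three_point_line_in_union[of "?L ! a" "?L ! b"] union p by auto
  then have "c \<in> {a, b}" "d \<in> {a, b}"
    using p nth_eq_iff_index_eq[OF distinct_three_point_lines] by auto
  with p show "p = p'"
    by auto
qed

lemma pair_conic_if_rich_reducible:
  assumes "q \<noteq> (0, 0, 0, 0, 0, 0)" "6 \<le> card (conic_pts q)" "\<forall>v. qf q v = lin l v * lin l' v"
  shows "conic_of q \<in> pair_conic ` disjoint_line_pairs"
proof -
  let ?L = three_point_lines
  note l = rich_reducible_conic_lines[OF assms]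
  obtain s where s: "s \<in> set ?L" "line_pts l = set s"
    using line_pts_eq_three_point_line l by metis
  obtain t where t: "t \<in> set ?L" "line_pts l' = set t"
    using line_pts_eq_three_point_line l by metis
  obtain c where c: "c \<noteq> 0" "l = smult3 c (line_of s)"
    using proportional_line_of[of l s] l s by auto
  obtain c' where c': "c' \<noteq> 0" "l' = smult3 c' (line_of t)"
    using proportional_line_of[of l' t] l t by auto
  have conic: "conic_of q = conic_of (prod_qform (line_of s) (line_of t))"
    using prod_qform_unique[OF assms(3)] c c' by (simp add: prod_qform_smult3 conic_of_qsmult)
  obtain a b where ab: "a < length ?L" "?L ! a = s" "b < length ?L" "?L ! b = t"
    using s(1) t(1) by (meson in_set_conv_nth)
  have disj: "set s \<inter> set t = {}"
    using l(5) s t by simp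
  with card_three_point_line[OF s(1)] ab have "a \<noteq> b"
    by auto
  then consider "a < b" | "b < a"
    by linarith
  then show ?thesis
  proof cases
    case 1
    with ab disj have "(a, b) \<in> disjoint_line_pairs"
      by (simp add: disjoint_line_pairs_def)
    with ab conic show ?thesis
      unfolding pair_conic_def by force
  next
    case 2
    with ab disj have "(b, a) \<in> disjoint_line_pairs"
      by (auto simp: disjoint_line_pairs_def)
    with ab conic show ?thesis
      unfolding pair_conic_def by (force simp: prod_qform_commute)
  qed
qed

lemma rich_reducible_if_pair_conic:
  assumes "p \<in> disjoint_line_pairs"
  obtains q where "pair_conic p = conic_of q" "q \<noteq> (0, 0, 0, 0, 0, 0)"
    "6 \<le> card (conic_pts q)" "reducible q"
proof -
  let ?L = three_point_lines
  obtain a b where p: "p = (a, b)" "a < b" "b < length ?L" "set (?L ! a) \<inter> set (?L ! b) = {}"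
    using assms by (auto simp: disjoint_line_pairs_def)
  define q where "q = prod_qform (line_of (?L ! a)) (line_of (?L ! b))"
  have "card (conic_pts q) = card (set (?L ! a)) + card (set (?L ! b))"
    using p by (simp add: q_def conic_pts_pair card_Un_disjoint)
  also have "\<dots> = 6"
    using p card_three_point_line[OF nth_mem, of a] card_three_point_line[OF nth_mem, of b]
    by simp
  finally have six: "card (conic_pts q) = 6" .
  have "q \<noteq> (0, 0, 0, 0, 0, 0)"
  proof
    assume "q = (0, 0, 0, 0, 0, 0)"
    then have "conic_pts q = {..<27}"
      by (auto simp: conic_pts_def qf_def)
    with six show False
      by simp
  qed
  moreover have "reducible q"
    unfolding reducible_def q_def using qf_prod_qform by blast
  moreover have "pair_conic p = conic_of q"
    by (simp add: p pair_conic_def q_def)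
  ultimately show thesis
    using that six by simp
qed

lemma rich_reducible_conics_eq:
  "{conic_of q | q. q \<noteq> (0, 0, 0, 0, 0, 0) \<and> card {P \<in> sextactic. on_conic q P} \<ge> 6 \<and> reducible q} =
    pair_conic ` disjoint_line_pairs"
  unfolding card_sextactic_on_conic
proof (intro equalityI subsetI)
  fix C
  assume "C \<in> {conic_of q | q. q \<noteq> (0, 0, 0, 0, 0, 0) \<and> 6 \<le> card (conic_pts q) \<and> reducible q}"
  then show "C \<in> pair_conic ` disjoint_line_pairs"
    using pair_conic_if_rich_reducible unfolding reducible_def by blast
next
  fix C
  assume "C \<in> pair_conic ` disjoint_line_pairs"
  then obtain p where p: "p \<in> disjoint_line_pairs" "C = pair_conic p"
    by blast
  then obtain q where "C = conic_of q" "q \<noteq> (0, 0, 0, 0, 0, 0)" "6 \<le> card (conic_pts q)" "reducible q"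
    using rich_reducible_if_pair_conic by metis
  then show "C \<in> {conic_of q | q. q \<noteq> (0, 0, 0, 0, 0, 0) \<and> 6 \<le> card (conic_pts q) \<and> reducible q}"
    by blast
qed

lemma rich_reducible_conic_factors:
  assumes "q \<noteq> (0, 0, 0, 0, 0, 0)" "card {P \<in> sextactic. on_conic q P} \<ge> 6"
    and "\<forall>v. qf q v = lin l v * lin l' v"
  shows "\<not> same_line l l' \<and> card {P \<in> sextactic. on_line l P} = 3 \<and>
    card {P \<in> sextactic. on_line l' P} = 3 \<and> (\<forall>P\<in>sextactic. \<not> (on_line l P \<and> on_line l' P))"
proof -
  note l = rich_reducible_conic_lines[OF assms(1) _ assms(3)]
  have lines: "card (line_pts l) = 3" "card (line_pts l') = 3" "line_pts l \<inter> line_pts l' = {}"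
    using l assms(2) by (simp_all add: card_sextactic_on_conic)
  have "\<not> same_line l l'"
  proof
    assume "same_line l l'"
    then obtain k where "k \<noteq> 0" "l' = smult3 k l"
      unfolding same_line_def by (cases l) auto
    then have "line_pts l' = line_pts l"
      by (simp add: line_pts_def lin_smult3_left)
    with lines show False
      by simp
  qed
  moreover have "\<forall>P\<in>sextactic. \<not> (on_line l P \<and> on_line l' P)"
    using lines(3) by (auto simp: sextactic_eq on_line_sext_pt)
  ultimately show ?thesis
    using lines by (simp add: card_sextactic_on_line)
qed

theorem mainTheorem7:
  shows "card {conic_of q | q. q \<noteq> (0, 0, 0, 0, 0, 0) \<and>
              card {P \<in> sextactic. on_conic q P} \<ge> 6 \<and> reducible q} = 2268
    \<and> (\<forall>q. q \<noteq> (0, 0, 0, 0, 0, 0) \<and> card {P \<in> sextactic. on_conic q P} \<ge> 6 \<and> reducible q \<longrightarrow>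
         (\<forall>l l'. (\<forall>v. qf q v = lin l v * lin l' v) \<longrightarrow>
            \<not> same_line l l' \<and>
            card {P \<in> sextactic. on_line l P} = 3 \<and>
            card {P \<in> sextactic. on_line l' P} = 3 \<and>
            (\<forall>P\<in>sextactic. \<not> (on_line l P \<and> on_line l' P))))"
proof (rule conjI; (intro allI impI)?)
  show "card {conic_of q | q. q \<noteq> (0, 0, 0, 0, 0, 0) \<and>
      card {P \<in> sextactic. on_conic q P} \<ge> 6 \<and> reducible q} = 2268"
    unfolding rich_reducible_conics_eq
    by (simp add: card_image[OF inj_on_pair_conic] card_disjoint_line_pairs)
next
  fix q l l'
  assume "q \<noteq> (0, 0, 0, 0, 0, 0) \<and> card {P \<in> sextactic. on_conic q P} \<ge> 6 \<and> reducible q"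
    and "\<forall>v. qf q v = lin l v * lin l' v"
  then show "\<not> same_line l l' \<and> card {P \<in> sextactic. on_line l P} = 3 \<and>
      card {P \<in> sextactic. on_line l' P} = 3 \<and> (\<forall>P\<in>sextactic. \<not> (on_line l P \<and> on_line l' P))"
    using rich_reducible_conic_factors by blast
qed

end
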